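(* Let $d=1$ and, for probability measures $\mu$ on $\mathbb R$ with $\int|y|\,\mu(dy)<\infty$, let $$a(x,\mu)=x^2\Big(\int_{\mathbb R}|y|\,\mu(dy)\Big)^3,\qquad b(x,\mu)=-2x^3\int_{\mathbb R}|y|\,\mu(dy),\qquad L_\mu u=a(x,\mu)u''+b(x,\mu)u'.$$ (a) With $m=0$, $V(x)=x^2/2$ and $H\equiv0$, all assumptions of Corollary 2.3 hold: conditions (H1.1), (H1.2), (H1.3) and (H2) are satisfied, $|a(0,\mu)|+|b(0,\mu)|\le C_1+C_2\int H\,d\mu$ for any $C_1,C_2>0$, and there exist $C,\Lambda>0$ (e.g. $C=3$, $\Lambda=2$) such that $\int_{\mathbb R}L_\mu V\,d\mu\le C-\Lambda\int_{\mathbb R}V\,d\mu$ for every compactly supported probability measure $\mu$ on $\mathbb R$. (b) There is no function $U\in C^2(\mathbb R)$ with $U\ge0$, $U(x)\to+\infty$ as $|x|\to\infty$, together with positive numbers $C,\Lambda$, such that $L_\mu U(x)\le C-\Lambda U(x)$ for all $x\in\mathbb R$ and all probability measures $\mu$ with $\int U\,d\mu<\infty$ and $\int |y|\,d\mu<\infty$.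
   Context: For a function $V\in C^2(\mathbb R^d)$, $V\ge0$, $V\to\infty$ at infinity: $\mathcal P_R(V)$ is the set of probability measures with $\int V\,d\mu\le R$; $\mathcal P(V)$ those with $V\in L^1(\mu)$; $\mu_n\to\mu$ $V$-weakly in $\mathcal P(V)$ means $\int f\,d\mu_n\to\int f\,d\mu$ for all continuous $f$ with $f/V\to0$ at infinity. With $m=0$ (no nondegenerate variables, $z=x$), the conditions read: (H1.1) vacuous; (H1.2) for every $R>0$ and every bounded interval $K$: $\sup_{x\in K,\mu\in\mathcal P_R(V)}(|a(x,\mu)|+|b(x,\mu)|)<\infty$; (H1.3) for every $R>0$ and every bounded interval $K$ there is a nonnegative continuous monotone $\omega_{K,R}$ on $[0,\infty)$ with $\omega_{K,R}(0)=0$ and $\sup_{\mu\in\mathcal P_R(V)}(|a(x,\mu)-a(x',\mu)|+|b(x,\mu)-b(x',\mu)|)\le\omega_{K,R}(|x-x'|)$ for $x,x'\in K$; (H2) for every $R>0$, if $\mu_n\in\mathcal P_R(V)$ converges $V$-weakly to $\mu\in\mathcal P_R(V)$ then $|a(x,\mu_n)-a(x,\mu)|+|b(x,\mu_n)-b(x,\mu)|\to0$ for every $x$. Corollary 2.3 (for reference) asserts existence of a probability solution of $(a(x,\mu)\mu)''-(b(x,\mu)\mu)'=0$ under (H1), (H2), the bound $|a(0,\mu)|+|b(0,\mu)|\le C_1+C_2\int H\,d\mu$ with continuous $H\ge0$, $H/V\to0$, and $\int L_\mu V\,d\mu\le C-\Lambda\int V\,d\mu$ for all compactly supported probability measures $\mu$.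 *)

theory Defs
  imports "HOL-Probability.Probability"
begin

definition prob_on_R :: "real measure \<Rightarrow> bool" where
  "prob_on_R M \<longleftrightarrow> prob_space M \<and> sets M = sets borel"

definition PV :: "(real \<Rightarrow> real) \<Rightarrow> real measure set" where
  "PV V = {M. prob_on_R M \<and> integrable M V}"

definition PRV :: "(real \<Rightarrow> real) \<Rightarrow> real \<Rightarrow> real measure set" where
  "PRV V R = {M. prob_on_R M \<and> integrable M V \<and> integral\<^sup>L M V \<le> R}"

definition C2 :: "(real \<Rightarrow> real) \<Rightarrow> bool" where
  "C2 f \<longleftrightarrow> (\<forall>x. f differentiable at x) \<and> (\<forall>x. deriv f differentiable at x)
     \<and> continuous_on UNIV (deriv (deriv f))"

definition bdd_interval :: "real set \<Rightarrow> bool" where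
  "bdd_interval K \<longleftrightarrow> is_interval K \<and> bounded K"

definition V_weak_conv :: "(real \<Rightarrow> real) \<Rightarrow> (nat \<Rightarrow> real measure) \<Rightarrow> real measure \<Rightarrow> bool" where
  "V_weak_conv V \<mu>s \<mu> \<longleftrightarrow>
     (\<forall>f. continuous_on UNIV f \<and> ((\<lambda>x. f x / V x) \<longlongrightarrow> 0) at_infinity \<longrightarrow>
        (\<lambda>n. integral\<^sup>L (\<mu>s n) f) \<longlonglongrightarrow> integral\<^sup>L \<mu> f)"

definition modulus :: "(real \<Rightarrow> real) \<Rightarrow> bool" where
  "modulus \<omega> \<longleftrightarrow> continuous_on {0..} \<omega> \<and> mono_on {0..} \<omega> \<and> (\<forall>t\<ge>0. \<omega> t \<ge> 0) \<and> \<omega> 0 = 0"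

definition H1_2 :: "(real \<Rightarrow> real measure \<Rightarrow> real) \<Rightarrow> (real \<Rightarrow> real measure \<Rightarrow> real)
    \<Rightarrow> (real \<Rightarrow> real) \<Rightarrow> bool" where
  "H1_2 a b V \<longleftrightarrow> (\<forall>R>0. \<forall>K. bdd_interval K \<longrightarrow>
     (\<exists>B. \<forall>x\<in>K. \<forall>\<mu>\<in>PRV V R. \<bar>a x \<mu>\<bar> + \<bar>b x \<mu>\<bar> \<le> B))"

definition H1_3 :: "(real \<Rightarrow> real measure \<Rightarrow> real) \<Rightarrow> (real \<Rightarrow> real measure \<Rightarrow> real)
    \<Rightarrow> (real \<Rightarrow> real) \<Rightarrow> bool" where
  "H1_3 a b V \<longleftrightarrow> (\<forall>R>0. \<forall>K. bdd_interval K \<longrightarrow>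
     (\<exists>\<omega>. modulus \<omega> \<and> (\<forall>x\<in>K. \<forall>x'\<in>K. \<forall>\<mu>\<in>PRV V R.
        \<bar>a x \<mu> - a x' \<mu>\<bar> + \<bar>b x \<mu> - b x' \<mu>\<bar> \<le> \<omega> \<bar>x - x'\<bar>)))"

definition H2 :: "(real \<Rightarrow> real measure \<Rightarrow> real) \<Rightarrow> (real \<Rightarrow> real measure \<Rightarrow> real)
    \<Rightarrow> (real \<Rightarrow> real) \<Rightarrow> bool" where
  "H2 a b V \<longleftrightarrow> (\<forall>R>0. \<forall>\<mu>s \<mu>. (\<forall>n. \<mu>s n \<in> PRV V R) \<and> \<mu> \<in> PRV V R \<and> V_weak_conv V \<mu>s \<mu> \<longrightarrow>
     (\<forall>x. (\<lambda>n. \<bar>a x (\<mu>s n) - a x \<mu>\<bar> + \<bar>b x (\<mu>s n) - b x \<mu>\<bar>) \<longlonglongrightarrow> 0))"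

definition Lop :: "(real \<Rightarrow> real measure \<Rightarrow> real) \<Rightarrow> (real \<Rightarrow> real measure \<Rightarrow> real)
    \<Rightarrow> real measure \<Rightarrow> (real \<Rightarrow> real) \<Rightarrow> real \<Rightarrow> real" where
  "Lop a b \<mu> u x = a x \<mu> * deriv (deriv u) x + b x \<mu> * deriv u x"

definition compact_supp :: "real measure \<Rightarrow> bool" where
  "compact_supp M \<longleftrightarrow> (\<exists>K. compact K \<and> K \<in> sets M \<and> emeasure M (UNIV - K) = 0)"

definition ex_a :: "real \<Rightarrow> real measure \<Rightarrow> real" where
  "ex_a x \<mu> = x\<^sup>2 * (\<integral>y. \<bar>y\<bar> \<partial>\<mu>) ^ 3"

definition ex_b :: "real \<Rightarrow> real measure \<Rightarrow> real" where
  "ex_b x \<mu> = - 2 * x ^ 3 * (\<integral>y. \<bar>y\<bar> \<partial>\<mu>)"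

end

theory Submission
  imports Defs
begin

text \<open>
  (a) Since \<open>\<bar>y\<bar> \<le> 1/2 + y\<^sup>2/2\<close>, the first absolute moment \<open>m = \<integral>\<bar>y\<bar> d\<mu>\<close> is bounded on
  \<open>P\<^sub>R(V)\<close> and continuous under \<open>V\<close>-weak convergence (\<open>\<bar>y\<bar> = o(V)\<close>); the coefficients are
  polynomials in \<open>x\<close> with coefficients depending on \<open>\<mu>\<close> only through \<open>m\<close>, which gives (H1) and (H2).
  With \<open>s = \<integral>y\<^sup>2 d\<mu>\<close> and \<open>q = \<integral>y\<^sup>4 d\<mu>\<close> one has \<open>\<integral>L\<^sub>\<mu>V d\<mu> = m\<^sup>3 s - 2 m q\<close>. Jensen gives
  \<open>m\<^sup>2 \<le> s\<close> and \<open>s\<^sup>2 \<le> q\<close>, hence \<open>m\<^sup>3 s \<le> m q\<close>; for \<open>m \<ge> 1\<close> this leaves \<open>-s\<^sup>2 \<le> 3 - s\<close>, and for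
  \<open>m < 1\<close> Young's inequality \<open>3 m y\<^sup>2 \<le> 2\<bar>y\<bar> + m\<^sup>3 y\<^sup>4\<close> integrates to \<open>3 s \<le> 2 + m\<^sup>2 q\<close>.

  (b) Under the Dirac mass at \<open>0\<close> both coefficients vanish, so \<open>L\<^sub>\<mu>U = 0\<close> and the Lyapunov
  inequality would force \<open>U \<le> C/\<Lambda>\<close> everywhere, contradicting \<open>U \<rightarrow> \<infinity>\<close>.
\<close>

lemma prob_on_R_borel_measurable:
  "prob_on_R M \<Longrightarrow> continuous_on UNIV f \<Longrightarrow> (f :: real \<Rightarrow> real) \<in> borel_measurable M"
  unfolding prob_on_R_def using borel_measurable_continuous_onI measurable_cong_sets by blast

lemma prob_on_R_return: "prob_on_R (return borel x)"
  unfolding prob_on_R_def by (simp add: prob_space_return)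

lemma compact_supp_AE_bounded:
  assumes "prob_on_R M" "compact_supp M"
  shows "\<exists>B. AE x in M. \<bar>x\<bar> \<le> B"
proof -
  obtain K where K: "compact K" "K \<in> sets M" "emeasure M (UNIV - K) = 0"
    using assms(2) unfolding compact_supp_def by blast
  obtain B where B: "\<forall>x\<in>K. norm x \<le> B"
    using compact_imp_bounded[OF K(1)] bounded_iff by blast
  have space: "space M = UNIV"
    using assms(1) unfolding prob_on_R_def by (metis sets_eq_imp_space_eq space_borel)
  have "UNIV - K \<in> null_sets M"
    using K space by (metis null_setsI sets.compl_sets)
  then have "AE x in M. x \<in> K"
    by (rule AE_I') (auto simp: space)
  then have "AE x in M. \<bar>x\<bar> \<le> B"
    by eventually_elim (use B in auto)
  then show ?thesis by blast
qed

lemma integrable_continuous_AE_bounded: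
  assumes "prob_on_R M" "AE x in M. \<bar>x\<bar> \<le> B" "continuous_on UNIV f"
  shows "integrable M (f :: real \<Rightarrow> real)"
proof -
  interpret prob_space M
    using assms(1) unfolding prob_on_R_def by blast
  have "compact (f ` cball 0 B)"
    by (rule compact_continuous_image) (use assms(3) continuous_on_subset in auto)
  then obtain D where D: "\<forall>y\<in>f ` cball 0 B. norm y \<le> D"
    using compact_imp_bounded bounded_iff by blast
  have "AE x in M. norm (f x) \<le> D"
    using assms(2) by eventually_elim (use D in auto)
  then show ?thesis
    by (rule integrable_const_bound) (rule prob_on_R_borel_measurable[OF assms(1,3)])
qed

lemma (in prob_space) square_integral_le_integral_square:
  fixes f :: "'a \<Rightarrow> real"
  assumes "integrable M f" "integrable M (\<lambda>x. (f x)\<^sup>2)"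
  shows "(integral\<^sup>L M f)\<^sup>2 \<le> integral\<^sup>L M (\<lambda>x. (f x)\<^sup>2)"
  using variance_positive[of f] variance_eq[OF assms] by simp

lemma Young_quartic:
  fixes m y :: real
  assumes "0 \<le> m"
  shows "3 * m * y\<^sup>2 \<le> 2 * \<bar>y\<bar> + m ^ 3 * y ^ 4"
proof -
  define t where "t = m * \<bar>y\<bar>"
  have "0 \<le> \<bar>y\<bar> * ((t - 1)\<^sup>2 * (t + 2))"
    using assms by (simp add: t_def)
  then show ?thesis
    unfolding t_def by (simp add: algebra_simps power2_eq_square power3_eq_cube power4_eq_xxxx)
qed

lemma moment_combination:
  fixes m s q :: real
  assumes "0 \<le> m" "m\<^sup>2 \<le> s" "s\<^sup>2 \<le> q"
    and Young: "3 * m * s \<le> 2 * m + m ^ 3 * q"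
    and zero: "m = 0 \<Longrightarrow> s = 0"
  shows "m ^ 3 * s - 2 * m * q \<le> 3 - s"
proof -
  have "0 \<le> s" "0 \<le> q"
    using assms(2,3) by (metis order.trans zero_le_power2)+
  have "m\<^sup>2 * s \<le> q"
    using assms(2,3) \<open>0 \<le> s\<close> by (metis mult_right_mono order.trans power2_eq_square)
  then have mq: "m ^ 3 * s \<le> m * q"
    using mult_left_mono[OF _ assms(1)] by (fastforce simp: power3_eq_cube power2_eq_square ac_simps)
  consider "m = 0" | "0 < m" "m < 1" | "1 \<le> m"
    using assms(1) by linarith
  then show ?thesis
  proof cases
    case 1
    then show ?thesis using zero by simp
  next
    case 2
    have "m * (3 * s) \<le> m * (2 + m\<^sup>2 * q)"
      using Young by (simp add: power3_eq_cube power2_eq_square algebra_simps)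
    then have "3 * s \<le> 2 + m\<^sup>2 * q"
      using 2 by (simp add: mult_le_cancel_left_pos)
    moreover have "m\<^sup>2 * q \<le> m * q"
      using 2 \<open>0 \<le> q\<close> by (simp add: power2_eq_square mult_left_le_one_le mult_right_mono)
    moreover have "0 \<le> m * q"
      using assms(1) \<open>0 \<le> q\<close> by simp
    ultimately show ?thesis using mq by linarith
  next
    case 3
    then have "q \<le> m * q"
      using \<open>0 \<le> q\<close> by (simp add: mult_le_cancel_right1)
    moreover have "0 \<le> (s - 1/2)\<^sup>2 + 11/4"
      by simp
    ultimately show ?thesis
      using mq assms(3) by (simp add: power2_eq_square algebra_simps)
  qed
qed

lemma deriv_half_square: "deriv (\<lambda>x::real. x\<^sup>2 / 2) = (\<lambda>x. x)"
  by (rule ext, rule DERIV_imp_deriv) (auto intro!: derivative_eq_intros)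

lemma deriv_ident_real: "deriv (\<lambda>x::real. x) = (\<lambda>x. 1)"
  by (rule ext, rule DERIV_imp_deriv) (auto intro!: derivative_eq_intros)

lemma C2_half_square: "C2 (\<lambda>x::real. x\<^sup>2 / 2)"
  unfolding C2_def deriv_half_square deriv_ident_real
  by (auto intro!: derivative_intros continuous_intros)

lemma filterlim_half_square_at_infinity: "filterlim (\<lambda>x::real. x\<^sup>2 / 2) at_top at_infinity"
proof -
  have "filterlim (\<lambda>x::real. (norm x) ^ 2) at_top at_infinity"
    by (intro filterlim_pow_at_top filterlim_norm_at_top) simp
  then have "filterlim (\<lambda>x::real. x\<^sup>2 * (1/2)) at_top at_infinity"
    by (intro filterlim_at_top_mult_tendsto_pos[OF tendsto_const]) simp_all
  then show ?thesis
    by simp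
qed

lemma Lop_ex_half_square:
  "Lop ex_a ex_b \<mu> (\<lambda>x. x\<^sup>2 / 2) x = (\<integral>y. \<bar>y\<bar> \<partial>\<mu>) ^ 3 * x\<^sup>2 - 2 * (\<integral>y. \<bar>y\<bar> \<partial>\<mu>) * x ^ 4"
  unfolding Lop_def ex_a_def ex_b_def deriv_half_square deriv_ident_real
  by (simp add: algebra_simps power2_eq_square power4_eq_xxxx power3_eq_cube)

lemma integral_Lop_ex_half_square_le:
  assumes P: "prob_on_R \<mu>" and "compact_supp \<mu>"
  shows "(\<integral>x. Lop ex_a ex_b \<mu> (\<lambda>x. x\<^sup>2 / 2) x \<partial>\<mu>) \<le> 3 - 2 * (\<integral>x. x\<^sup>2 / 2 \<partial>\<mu>)"
proof -
  interpret prob_space \<mu>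
    using P unfolding prob_on_R_def by blast
  obtain B where B: "AE x in \<mu>. \<bar>x\<bar> \<le> B"
    using compact_supp_AE_bounded[OF assms] by blast
  have i1: "integrable \<mu> (\<lambda>x. \<bar>x\<bar>)" and i2: "integrable \<mu> (\<lambda>x. x\<^sup>2)" and i4: "integrable \<mu> (\<lambda>x. x ^ 4)"
    by (rule integrable_continuous_AE_bounded[OF P B], intro continuous_intros)+
  define m where "m = (\<integral>y. \<bar>y\<bar> \<partial>\<mu>)"
  define s where "s = (\<integral>y. y\<^sup>2 \<partial>\<mu>)"
  define q where "q = (\<integral>y. y ^ 4 \<partial>\<mu>)"
  have "m\<^sup>2 \<le> s"
    using square_integral_le_integral_square[OF i1] i2 unfolding m_def s_def by simp
  moreover have "s\<^sup>2 \<le> q"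
    using square_integral_le_integral_square[OF i2] i4
    unfolding q_def s_def power_mult[symmetric] by simp
  moreover have "3 * m * s \<le> 2 * m + m ^ 3 * q"
  proof -
    have "(\<integral>y. 3 * m * y\<^sup>2 \<partial>\<mu>) \<le> (\<integral>y. 2 * \<bar>y\<bar> + m ^ 3 * y ^ 4 \<partial>\<mu>)"
      using i1 i2 i4 Young_quartic[of m] by (intro integral_mono) (auto simp: m_def)
    then show ?thesis
      using i1 i2 i4 unfolding m_def s_def q_def by simp
  qed
  moreover have "s = 0" if "m = 0"
  proof -
    have "AE x in \<mu>. \<bar>x\<bar> = 0"
      using integral_nonneg_eq_0_iff_AE[OF i1] that unfolding m_def by simp
    then have "AE x in \<mu>. x\<^sup>2 = 0"
      by eventually_elim simp
    then show "s = 0"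
      unfolding s_def by (rule integral_eq_zero_AE)
  qed
  ultimately have "m ^ 3 * s - 2 * m * q \<le> 3 - s"
    by (intro moment_combination) (auto simp: m_def)
  then show ?thesis
    using i2 i4 unfolding Lop_ex_half_square m_def s_def q_def by simp
qed

lemma abs_le_half_square: "\<bar>y :: real\<bar> \<le> 1/2 + y\<^sup>2 / 2"
proof -
  have "0 \<le> (\<bar>y\<bar> - 1)\<^sup>2" by simp
  then show ?thesis by (simp add: power2_eq_square algebra_simps)
qed

lemma PRV_half_square_abs_moment:
  assumes "\<mu> \<in> PRV (\<lambda>x. x\<^sup>2 / 2) R"
  shows "integrable \<mu> (\<lambda>y. \<bar>y\<bar>)" "(\<integral>y. \<bar>y\<bar> \<partial>\<mu>) \<le> 1/2 + R"
proof -
  have P: "prob_on_R \<mu>" and iV: "integrable \<mu> (\<lambda>x. x\<^sup>2 / 2)" and IR: "(\<integral>x. x\<^sup>2 / 2 \<partial>\<mu>) \<le> R"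
    using assms unfolding PRV_def by auto
  interpret prob_space \<mu>
    using P unfolding prob_on_R_def by blast
  have ib: "integrable \<mu> (\<lambda>y. 1/2 + y\<^sup>2 / 2)"
    using iV by simp
  show i1: "integrable \<mu> (\<lambda>y. \<bar>y\<bar>)"
    by (rule Bochner_Integration.integrable_bound[OF ib])
      (auto intro!: prob_on_R_borel_measurable[OF P] continuous_intros simp: abs_le_half_square)
  have "(\<integral>y. \<bar>y\<bar> \<partial>\<mu>) \<le> (\<integral>y. 1/2 + y\<^sup>2 / 2 \<partial>\<mu>)"
    by (rule integral_mono[OF i1 ib]) (rule abs_le_half_square)
  also have "\<dots> = 1/2 + (\<integral>x. x\<^sup>2 / 2 \<partial>\<mu>)"
    using iV by (simp add: prob_space)
  finally show "(\<integral>y. \<bar>y\<bar> \<partial>\<mu>) \<le> 1/2 + R"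
    using IR by simp
qed

lemma bdd_interval_abs_bound: "bdd_interval K \<Longrightarrow> \<exists>D\<ge>0. \<forall>x\<in>K. \<bar>x :: real\<bar> \<le> D"
  unfolding bdd_interval_def bounded_iff by (metis abs_ge_zero order.trans real_norm_def)

lemma abs_power_diff_le:
  fixes x y D :: real
  assumes "\<bar>x\<bar> \<le> D" "\<bar>y\<bar> \<le> D"
  shows "\<bar>x ^ Suc n - y ^ Suc n\<bar> \<le> Suc n * D ^ n * \<bar>x - y\<bar>"
proof (induction n)
  case 0
  then show ?case by simp
next
  case (Suc n)
  have "x ^ Suc (Suc n) - y ^ Suc (Suc n) = x * (x ^ Suc n - y ^ Suc n) + y ^ Suc n * (x - y)"
    by (simp add: algebra_simps)
  also have "\<bar>\<dots>\<bar> \<le> \<bar>x\<bar> * \<bar>x ^ Suc n - y ^ Suc n\<bar> + \<bar>y\<bar> ^ Suc n * \<bar>x - y\<bar>"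
    by (metis abs_mult abs_triangle_ineq power_abs)
  also have "\<dots> \<le> D * (Suc n * D ^ n * \<bar>x - y\<bar>) + D ^ Suc n * \<bar>x - y\<bar>"
    using assms Suc.IH by (intro add_mono mult_mono power_mono) auto
  also have "\<dots> = Suc (Suc n) * D ^ Suc n * \<bar>x - y\<bar>"
    by (simp add: algebra_simps)
  finally show ?case .
qed

lemma modulus_linear: "0 \<le> L \<Longrightarrow> modulus (\<lambda>t. L * t)"
  unfolding modulus_def by (auto intro!: continuous_intros mono_onI mult_left_mono)

lemma H1_2_ex: "H1_2 ex_a ex_b (\<lambda>x. x\<^sup>2 / 2)"
  unfolding H1_2_def
proof (intro allI impI)
  fix R :: real and K
  assume "bdd_interval K"
  then obtain D where D: "\<forall>x\<in>K. \<bar>x\<bar> \<le> D"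
    using bdd_interval_abs_bound by blast
  define M where "M = 1/2 + R"
  show "\<exists>B. \<forall>x\<in>K. \<forall>\<mu>\<in>PRV (\<lambda>x. x\<^sup>2 / 2) R. \<bar>ex_a x \<mu>\<bar> + \<bar>ex_b x \<mu>\<bar> \<le> B"
  proof (intro exI ballI)
    fix x \<mu>
    assume "x \<in> K" "\<mu> \<in> PRV (\<lambda>x. x\<^sup>2 / 2) R"
    then have x: "\<bar>x\<bar> \<le> D" and m: "0 \<le> (\<integral>y. \<bar>y\<bar> \<partial>\<mu>)" "(\<integral>y. \<bar>y\<bar> \<partial>\<mu>) \<le> M"
      using D PRV_half_square_abs_moment unfolding M_def by auto
    have "\<bar>ex_a x \<mu>\<bar> + \<bar>ex_b x \<mu>\<bar> = \<bar>x\<bar> ^ 2 * (\<integral>y. \<bar>y\<bar> \<partial>\<mu>) ^ 3 + 2 * \<bar>x\<bar> ^ 3 * (\<integral>y. \<bar>y\<bar> \<partial>\<mu>)"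
      unfolding ex_a_def ex_b_def by (simp add: abs_mult power_abs)
    also have "\<dots> \<le> D ^ 2 * M ^ 3 + 2 * D ^ 3 * M"
      using x m by (intro add_mono mult_mono mult_left_mono power_mono) auto
    finally show "\<bar>ex_a x \<mu>\<bar> + \<bar>ex_b x \<mu>\<bar> \<le> D ^ 2 * M ^ 3 + 2 * D ^ 3 * M" .
  qed
qed

lemma H1_3_ex: "H1_3 ex_a ex_b (\<lambda>x. x\<^sup>2 / 2)"
  unfolding H1_3_def
proof (intro allI impI)
  fix R :: real and K
  assume "R > 0" "bdd_interval K"
  then obtain D where D: "D \<ge> 0" "\<forall>x\<in>K. \<bar>x\<bar> \<le> D"
    using bdd_interval_abs_bound by blast
  define M where "M = 1/2 + R"
  define L where "L = 2 * D * M ^ 3 + 6 * D\<^sup>2 * M"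
  have "0 \<le> L"
    using \<open>R > 0\<close> D by (simp add: L_def M_def)
  show "\<exists>\<omega>. modulus \<omega> \<and> (\<forall>x\<in>K. \<forall>x'\<in>K. \<forall>\<mu>\<in>PRV (\<lambda>x. x\<^sup>2 / 2) R.
        \<bar>ex_a x \<mu> - ex_a x' \<mu>\<bar> + \<bar>ex_b x \<mu> - ex_b x' \<mu>\<bar> \<le> \<omega> \<bar>x - x'\<bar>)"
  proof (intro exI conjI ballI)
    show "modulus (\<lambda>t. L * t)"
      using \<open>0 \<le> L\<close> by (rule modulus_linear)
    fix x x' \<mu>
    assume "x \<in> K" "x' \<in> K" "\<mu> \<in> PRV (\<lambda>x. x\<^sup>2 / 2) R"
    define m where "m = (\<integral>y. \<bar>y\<bar> \<partial>\<mu>)"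
    have x: "\<bar>x\<bar> \<le> D" "\<bar>x'\<bar> \<le> D" and m: "0 \<le> m" "m \<le> M"
      using D PRV_half_square_abs_moment \<open>x \<in> K\<close> \<open>x' \<in> K\<close> \<open>\<mu> \<in> PRV _ R\<close>
      unfolding M_def m_def by auto
    have "ex_a x \<mu> - ex_a x' \<mu> = (x ^ 2 - x' ^ 2) * m ^ 3"
      unfolding ex_a_def m_def by (simp add: algebra_simps)
    moreover have "ex_b x \<mu> - ex_b x' \<mu> = - 2 * m * (x ^ 3 - x' ^ 3)"
      unfolding ex_b_def m_def by (simp add: algebra_simps)
    ultimately have "\<bar>ex_a x \<mu> - ex_a x' \<mu>\<bar> + \<bar>ex_b x \<mu> - ex_b x' \<mu>\<bar>
        = \<bar>x ^ 2 - x' ^ 2\<bar> * m ^ 3 + 2 * m * \<bar>x ^ 3 - x' ^ 3\<bar>"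
      using m by (simp add: abs_mult)
    also have "\<dots> \<le> (2 * D * \<bar>x - x'\<bar>) * M ^ 3 + 2 * M * (3 * D\<^sup>2 * \<bar>x - x'\<bar>)"
    proof (intro add_mono mult_mono mult_left_mono power_mono)
      show "\<bar>x ^ 2 - x' ^ 2\<bar> \<le> 2 * D * \<bar>x - x'\<bar>"
        using abs_power_diff_le[OF x, of 1] by (simp add: numeral_eq_Suc)
      show "\<bar>x ^ 3 - x' ^ 3\<bar> \<le> 3 * D\<^sup>2 * \<bar>x - x'\<bar>"
        using abs_power_diff_le[OF x, of 2] by (simp add: numeral_eq_Suc)
    qed (use m D in auto)
    also have "\<dots> = L * \<bar>x - x'\<bar>"
      by (simp add: L_def algebra_simps)
    finally show "\<bar>ex_a x \<mu> - ex_a x' \<mu>\<bar> + \<bar>ex_b x \<mu> - ex_b x' \<mu>\<bar> \<le> L * \<bar>x - x'\<bar>" .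
  qed
qed

lemma abs_over_half_square_tendsto_0: "((\<lambda>x::real. \<bar>x\<bar> / (x\<^sup>2 / 2)) \<longlongrightarrow> 0) at_infinity"
proof -
  have "((\<lambda>x::real. 2 / norm x) \<longlongrightarrow> 0) at_infinity"
    by (intro tendsto_divide_0[OF tendsto_const] filterlim_at_top_imp_at_infinity filterlim_norm_at_top)
  moreover have "\<bar>x\<bar> / (x\<^sup>2 / 2) = 2 / norm x" for x :: real
    by (cases "x = 0") (simp_all add: power2_eq_square field_simps)
  ultimately show ?thesis
    by simp
qed

lemma H2_ex: "H2 ex_a ex_b (\<lambda>x. x\<^sup>2 / 2)"
  unfolding H2_def
proof (intro allI impI)
  fix R :: real and \<mu>s \<mu> x
  assume "R > 0" and "(\<forall>n. \<mu>s n \<in> PRV (\<lambda>x. x\<^sup>2 / 2) R) \<and> \<mu> \<in> PRV (\<lambda>x. x\<^sup>2 / 2) R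
    \<and> V_weak_conv (\<lambda>x. x\<^sup>2 / 2) \<mu>s \<mu>"
  then have "(\<lambda>n. \<integral>y. \<bar>y\<bar> \<partial>\<mu>s n) \<longlonglongrightarrow> (\<integral>y. \<bar>y\<bar> \<partial>\<mu>)"
    using abs_over_half_square_tendsto_0 unfolding V_weak_conv_def
    by (auto intro!: continuous_intros)
  then have "(\<lambda>n. \<bar>ex_a x (\<mu>s n) - ex_a x \<mu>\<bar> + \<bar>ex_b x (\<mu>s n) - ex_b x \<mu>\<bar>) \<longlonglongrightarrow>
      \<bar>ex_a x \<mu> - ex_a x \<mu>\<bar> + \<bar>ex_b x \<mu> - ex_b x \<mu>\<bar>"
    unfolding ex_a_def ex_b_def by (intro tendsto_intros)
  then show "(\<lambda>n. \<bar>ex_a x (\<mu>s n) - ex_a x \<mu>\<bar> + \<bar>ex_b x (\<mu>s n) - ex_b x \<mu>\<bar>) \<longlonglongrightarrow> 0"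
    by simp
qed

lemma Lop_ex_return_0: "Lop ex_a ex_b (return borel 0) u x = 0"
  unfolding Lop_def ex_a_def ex_b_def by (simp add: integral_return)

lemma no_uniform_Lyapunov_function_ex:
  "\<not> (\<exists>U C \<Lambda>. C2 U \<and> (\<forall>x. U x \<ge> 0) \<and> filterlim U at_top at_infinity \<and> C > 0 \<and> \<Lambda> > 0 \<and>
        (\<forall>\<mu>. prob_on_R \<mu> \<and> integrable \<mu> U \<and> integrable \<mu> (\<lambda>y. \<bar>y\<bar>) \<longrightarrow>
           (\<forall>x. Lop ex_a ex_b \<mu> U x \<le> C - \<Lambda> * U x)))"
proof
  assume "\<exists>U C \<Lambda>. C2 U \<and> (\<forall>x. U x \<ge> 0) \<and> filterlim U at_top at_infinity \<and> C > 0 \<and> \<Lambda> > 0 \<and>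
        (\<forall>\<mu>. prob_on_R \<mu> \<and> integrable \<mu> U \<and> integrable \<mu> (\<lambda>y. \<bar>y\<bar>) \<longrightarrow>
           (\<forall>x. Lop ex_a ex_b \<mu> U x \<le> C - \<Lambda> * U x))"
  then obtain U C \<Lambda> where U: "C2 U" "filterlim U at_top at_infinity" "\<Lambda> > 0"
    and Lyapunov: "\<And>\<mu> x. prob_on_R \<mu> \<Longrightarrow> integrable \<mu> U \<Longrightarrow> integrable \<mu> (\<lambda>y. \<bar>y\<bar>) \<Longrightarrow>
       Lop ex_a ex_b \<mu> U x \<le> C - \<Lambda> * U x"
    by blast
  define \<delta> where "\<delta> = return borel (0::real)"
  have P: "prob_on_R \<delta>"
    unfolding \<delta>_def by (rule prob_on_R_return)
  have AE0: "AE x in \<delta>. \<bar>x\<bar> \<le> 0"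
    unfolding \<delta>_def by (simp add: AE_return)
  have "continuous_on UNIV U"
    using U(1) unfolding C2_def
    by (meson continuous_at_imp_continuous_on differentiable_imp_continuous_within)
  then have "integrable \<delta> U"
    by (rule integrable_continuous_AE_bounded[OF P AE0])
  moreover have "integrable \<delta> (\<lambda>y. \<bar>y\<bar>)"
    by (rule integrable_continuous_AE_bounded[OF P AE0]) (intro continuous_intros)
  ultimately have "0 \<le> C - \<Lambda> * U x" for x
    using Lyapunov[OF P] Lop_ex_return_0 unfolding \<delta>_def by metis
  then have bounded: "U x \<le> C / \<Lambda>" for x
    using U(3) by (simp add: field_simps)
  have "\<forall>\<^sub>F x in at_infinity. C / \<Lambda> < U x"
    using U(2) by (simp add: filterlim_at_top_dense)
  then obtain x where "C / \<Lambda> < U x"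
    using eventually_happens trivial_limit_at_infinity by blast
  with bounded show False
    by (meson not_le)
qed

theorem mainTheorem10:
  defines "V \<equiv> (\<lambda>x::real. x\<^sup>2 / 2)"
    and "H \<equiv> (\<lambda>x::real. 0::real)"
  shows
   "(C2 V \<and> (\<forall>x. V x \<ge> 0) \<and> filterlim V at_top at_infinity
     \<and> H1_2 ex_a ex_b V \<and> H1_3 ex_a ex_b V \<and> H2 ex_a ex_b V
     \<and> continuous_on UNIV H \<and> (\<forall>x. H x \<ge> 0) \<and> ((\<lambda>x. H x / V x) \<longlongrightarrow> 0) at_infinity
     \<and> (\<forall>c1 c2::real. c1 > 0 \<and> c2 > 0 \<longrightarrow> (\<forall>\<mu>\<in>PV V.
          \<bar>ex_a 0 \<mu>\<bar> + \<bar>ex_b 0 \<mu>\<bar> \<le> c1 + c2 * integral\<^sup>L \<mu> H))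
     \<and> (\<exists>C \<Lambda>::real. C > 0 \<and> \<Lambda> > 0 \<and> (\<forall>\<mu>. prob_on_R \<mu> \<and> compact_supp \<mu> \<longrightarrow>
          (\<integral>x. Lop ex_a ex_b \<mu> V x \<partial>\<mu>) \<le> C - \<Lambda> * integral\<^sup>L \<mu> V))
     \<and> (\<forall>\<mu>. prob_on_R \<mu> \<and> compact_supp \<mu> \<longrightarrow>
          (\<integral>x. Lop ex_a ex_b \<mu> V x \<partial>\<mu>) \<le> 3 - 2 * integral\<^sup>L \<mu> V))
  \<and> \<not> (\<exists>U C \<Lambda>. C2 U \<and> (\<forall>x. U x \<ge> 0) \<and> filterlim U at_top at_infinity \<and> C > 0 \<and> \<Lambda> > 0 \<and>
        (\<forall>\<mu>. prob_on_R \<mu> \<and> integrable \<mu> U \<and> integrable \<mu> (\<lambda>y. \<bar>y\<bar>) \<longrightarrow>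
           (\<forall>x. Lop ex_a ex_b \<mu> U x \<le> C - \<Lambda> * U x)))"
  proof -
  have Lyapunov: "\<forall>\<mu>. prob_on_R \<mu> \<and> compact_supp \<mu> \<longrightarrow>
      (\<integral>x. Lop ex_a ex_b \<mu> V x \<partial>\<mu>) \<le> 3 - 2 * integral\<^sup>L \<mu> V"
    unfolding V_def using integral_Lop_ex_half_square_le by blast
  then have "\<exists>C \<Lambda>::real. C > 0 \<and> \<Lambda> > 0 \<and> (\<forall>\<mu>. prob_on_R \<mu> \<and> compact_supp \<mu> \<longrightarrow>
      (\<integral>x. Lop ex_a ex_b \<mu> V x \<partial>\<mu>) \<le> C - \<Lambda> * integral\<^sup>L \<mu> V)"
    by (intro exI[of _ 3] exI[of _ 2]) simp
  moreover have "C2 V" "filterlim V at_top at_infinity"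
      "H1_2 ex_a ex_b V" "H1_3 ex_a ex_b V" "H2 ex_a ex_b V"
    unfolding V_def
    by (rule C2_half_square filterlim_half_square_at_infinity H1_2_ex H1_3_ex H2_ex)+
  ultimately show ?thesis
    using Lyapunov no_uniform_Lyapunov_function_ex
    by (simp add: V_def H_def ex_a_def ex_b_def)
qed

end
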